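(* Let $R$ be a commutative ring endowed with a translation-invariant partial order $\le$ on its additive group, and assume that $R$ is strongly localizable. Then $R$ is localizable.
   Context: Rings are commutative with unit $1$. Translation-invariant means $r\le s$ implies $r+t\le s+t$; $R^+=\{r:0\le r\}$. $\mathrm{Loc}(R)$ is the set of $s\in 1+R^+=\{1+t:t\in R^+\}$ such that for all $r\in R$, $rs\in R^+$ implies $r\in R^+$. $R$ is localizable if for every $r\in R$ there exists $s\in\mathrm{Loc}(R)$ with $-s\le r\le s$. $R$ is strongly localizable if $r^2\in R^+$ for all $r\in R$ and $\mathrm{Loc}(R)=1+R^+$. *)

theory Defs
  imports Main
begin

text \<open>A commutative ring with unit carrying a translation-invariant partial order on its
additive group: sort {comm_ring_1, ordered_ab_group_add}. No compatibility with
multiplication is assumed.\<close>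

definition pos_cone :: "'a::{comm_ring_1, ordered_ab_group_add} set" where
  "pos_cone = {r. 0 \<le> r}"

definition Loc :: "'a::{comm_ring_1, ordered_ab_group_add} set" where
  "Loc = {s. (\<exists>t\<in>pos_cone. s = 1 + t) \<and> (\<forall>r. r * s \<in> pos_cone \<longrightarrow> r \<in> pos_cone)}"

definition localizable :: "'a::{comm_ring_1, ordered_ab_group_add} itself \<Rightarrow> bool" where
  "localizable _ \<longleftrightarrow> (\<forall>r::'a. \<exists>s\<in>Loc. - s \<le> r \<and> r \<le> s)"

definition strongly_localizable :: "'a::{comm_ring_1, ordered_ab_group_add} itself \<Rightarrow> bool" where
  "strongly_localizable _ \<longleftrightarrow>
     (\<forall>r::'a. r * r \<in> pos_cone) \<and> Loc = {s::'a. \<exists>t\<in>pos_cone. s = 1 + t}"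

end

theory Submission
  imports Defs
begin

text \<open>The witness for \<open>r\<close> is \<open>s = 1 + r\<^sup>2\<close>: the identities
\<open>(s \<plusminus> r) * 2 = (r \<plusminus> 1)\<^sup>2 + r\<^sup>2 + 1\<close> show that \<open>2(s \<plusminus> r)\<close> are sums of squares,
hence nonnegative, and since \<open>2 = 1 + 1\<^sup>2\<close> lies in \<open>Loc\<close> the factor \<open>2\<close> may be cancelled.\<close>

lemma nonneg_of_mult_Loc:
  fixes r s :: "'a::{comm_ring_1, ordered_ab_group_add}"
  assumes "s \<in> Loc" and "0 \<le> r * s"
  shows "0 \<le> r"
  using assms unfolding Loc_def pos_cone_def by blast

lemma strongly_localizable_square_nonneg:
  fixes r :: "'a::{comm_ring_1, ordered_ab_group_add}"
  assumes "strongly_localizable TYPE('a)"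
  shows "0 \<le> r * r"
  using assms unfolding strongly_localizable_def pos_cone_def by blast

lemma strongly_localizable_Loc_iff:
  fixes s :: "'a::{comm_ring_1, ordered_ab_group_add}"
  assumes "strongly_localizable TYPE('a)"
  shows "s \<in> Loc \<longleftrightarrow> 1 \<le> s"
proof -
  have "s \<in> Loc \<longleftrightarrow> (\<exists>t. 0 \<le> t \<and> s = 1 + t)"
    using assms unfolding strongly_localizable_def pos_cone_def by auto
  also have "\<dots> \<longleftrightarrow> 1 \<le> s"
    by (metis add_diff_cancel_left' diff_add_cancel diff_ge_0_iff_ge add.commute)
  finally show ?thesis .
qed

lemma one_plus_square_pm_nonneg:
  fixes r :: "'a::{comm_ring_1, ordered_ab_group_add}"
  assumes square_nonneg: "\<And>x::'a. 0 \<le> x * x"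
  shows "0 \<le> (1 + r * r + r) * 2" and "0 \<le> (1 + r * r - r) * 2"
proof -
  have one: "(0::'a) \<le> 1"
    using square_nonneg [of 1] by simp
  have "(1 + r * r + r) * 2 = (r + 1) * (r + 1) + (r * r + 1)"
    by (simp add: algebra_simps)
  then show "0 \<le> (1 + r * r + r) * 2"
    by (simp only: add_nonneg_nonneg square_nonneg one)
  have "(1 + r * r - r) * 2 = (r - 1) * (r - 1) + (r * r + 1)"
    by (simp add: algebra_simps)
  then show "0 \<le> (1 + r * r - r) * 2"
    by (simp only: add_nonneg_nonneg square_nonneg one)
qed

theorem proposition2:
  assumes "strongly_localizable TYPE('a::{comm_ring_1, ordered_ab_group_add})"
  shows "localizable TYPE('a)"
  unfolding localizable_def
proof
  fix r :: 'a
  note square_nonneg = strongly_localizable_square_nonneg [OF assms]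
  note Loc_iff = strongly_localizable_Loc_iff [OF assms]
  define s where "s = 1 + r * r"
  have "s \<in> Loc"
    unfolding Loc_iff s_def using square_nonneg [of r] by simp
  have "(1::'a) \<le> 1 + 1"
    using square_nonneg [of 1] by (intro add_increasing) simp_all
  then have "(2::'a) \<in> Loc"
    by (simp only: Loc_iff one_add_one)
  have "0 \<le> s + r"
    using \<open>2 \<in> Loc\<close> one_plus_square_pm_nonneg(1) [OF square_nonneg, of r]
    unfolding s_def by (rule nonneg_of_mult_Loc)
  moreover have "0 \<le> s - r"
    using \<open>2 \<in> Loc\<close> one_plus_square_pm_nonneg(2) [OF square_nonneg, of r]
    unfolding s_def by (rule nonneg_of_mult_Loc)
  ultimately have "- s \<le> r" and "r \<le> s"
    using diff_ge_0_iff_ge [of r "- s"] diff_ge_0_iff_ge [of s r] by (simp_all add: add.commute)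
  with \<open>s \<in> Loc\<close> show "\<exists>s\<in>Loc. - s \<le> r \<and> r \<le> s"
    by blast
qed

end
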